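(* Let $X$ be a real Hilbert space and $T\colon X\to X$ averaged nonexpansive with $\operatorname{Fix}T\ne\varnothing$. Suppose that for every $\rho>0$ there exists $\theta<1$ such that for every $x$ with $\|x\|\le\rho$ there is $y\in\operatorname{Fix}T$ with $\langle x-y,Tx-y\rangle\le\theta\|x-y\|\,\|Tx-y\|$. Then $T$ is boundedly linearly regular; moreover, if $\theta$ can be chosen independently of $\rho$, then $T$ is linearly regular.
   Context: $T$ is averaged nonexpansive if $T=(1-\lambda)\mathrm{Id}+\lambda N$ with $\lambda\in[0,1[$ and $N$ nonexpansive. $T$ is linearly regular if there is $\kappa\ge0$ with $d_{\operatorname{Fix}T}(x)\le\kappa\|x-Tx\|$ for all $x\in X$; boundedly linearly regular if for each $\rho>0$ there is $\kappa\ge0$ with this inequality for all $\|x\|\le\rho$. *)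

theory Defs
  imports "HOL-Analysis.Analysis"
begin

definition nonexpansive :: "('a::real_normed_vector \<Rightarrow> 'a) \<Rightarrow> bool" where
  "nonexpansive N \<longleftrightarrow> (\<forall>x y. norm (N x - N y) \<le> norm (x - y))"

definition averaged_nonexpansive :: "('a::real_normed_vector \<Rightarrow> 'a) \<Rightarrow> bool" where
  "averaged_nonexpansive T \<longleftrightarrow>
     (\<exists>l N. 0 \<le> l \<and> l < 1 \<and> nonexpansive N \<and> (\<forall>x. T x = (1 - l) *\<^sub>R x + l *\<^sub>R N x))"

definition Fix :: "('a \<Rightarrow> 'a) \<Rightarrow> 'a set" where
  "Fix T = {x. T x = x}"

definition linearly_regular :: "('a::real_normed_vector \<Rightarrow> 'a) \<Rightarrow> bool" where
  "linearly_regular T \<longleftrightarrow> (\<exists>\<kappa>\<ge>0. \<forall>x. infdist x (Fix T) \<le> \<kappa> * norm (x - T x))"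

definition boundedly_linearly_regular :: "('a::real_normed_vector \<Rightarrow> 'a) \<Rightarrow> bool" where
  "boundedly_linearly_regular T \<longleftrightarrow>
     (\<forall>\<rho>>0. \<exists>\<kappa>\<ge>0. \<forall>x. norm x \<le> \<rho> \<longrightarrow> infdist x (Fix T) \<le> \<kappa> * norm (x - T x))"

end

theory Submission
  imports Defs
begin

text \<open>If the angle between \<open>x - y\<close> and \<open>T x - y\<close> at a fixed point \<open>y\<close> is bounded away from
  zero, then \<open>x - T x\<close>, the third side of the triangle \<open>x, T x, y\<close>, is comparable to \<open>x - y\<close>,
  and \<open>x - y\<close> dominates the distance from \<open>x\<close> to \<open>Fix T\<close>.\<close>

lemma norm_diff_ge_of_inner_le:
  fixes a b :: "'a::real_inner"
  assumes inner_le: "inner a b \<le> t * norm a * norm b" and "0 \<le> t" "t \<le> 1"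
  shows "(1 - t) * norm a \<le> norm (a - b)"
proof -
  let ?A = "norm a" and ?B = "norm b"
  have "(norm (a - b))\<^sup>2 = ?A\<^sup>2 - 2 * inner a b + ?B\<^sup>2"
    by (simp add: power2_norm_eq_inner inner_diff_left inner_diff_right inner_commute)
  also have "\<dots> \<ge> ((1 - t) * ?A)\<^sup>2 + (?B - t * ?A)\<^sup>2 + 2 * t * (1 - t) * ?A\<^sup>2"
    using inner_le by (simp add: power2_eq_square algebra_simps)
  finally have "((1 - t) * ?A)\<^sup>2 \<le> (norm (a - b))\<^sup>2"
    using assms(2,3) by (smt (verit) zero_le_power2 mult_nonneg_nonneg)
  then show ?thesis
    by (rule power2_le_imp_le) simp
qed

lemma infdist_Fix_le_of_inner_le:
  fixes T :: "'a::real_inner \<Rightarrow> 'a"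
  assumes "\<theta> < 1" and "y \<in> Fix T"
    and "inner (x - y) (T x - y) \<le> \<theta> * norm (x - y) * norm (T x - y)"
  shows "infdist x (Fix T) \<le> norm (x - T x) / (1 - max \<theta> 0)"
proof -
  have "inner (x - y) (T x - y) \<le> max \<theta> 0 * norm (x - y) * norm (T x - y)"
    using assms(3) by (smt (verit) mult_right_mono norm_ge_zero zero_le_mult_iff)
  then have "(1 - max \<theta> 0) * norm (x - y) \<le> norm ((x - y) - (T x - y))"
    by (rule norm_diff_ge_of_inner_le) (use assms(1) in auto)
  then have "norm (x - y) \<le> norm (x - T x) / (1 - max \<theta> 0)"
    using assms(1) by (simp add: field_simps)
  moreover have "infdist x (Fix T) \<le> dist x y"
    using assms(2) by (rule infdist_le)
  ultimately show ?thesis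
    by (simp add: dist_norm)
qed

lemma uniform_infdist_Fix_bound_on:
  fixes T :: "'a::real_inner \<Rightarrow> 'a"
  assumes "\<theta> < 1"
    and "\<forall>x\<in>S. \<exists>y\<in>Fix T. inner (x - y) (T x - y) \<le> \<theta> * norm (x - y) * norm (T x - y)"
  shows "\<exists>\<kappa>\<ge>0. \<forall>x\<in>S. infdist x (Fix T) \<le> \<kappa> * norm (x - T x)"
proof (intro exI conjI ballI)
  show "0 \<le> 1 / (1 - max \<theta> 0)"
    using assms(1) by simp
  fix x assume "x \<in> S"
  with assms(2) obtain y where "y \<in> Fix T"
    and "inner (x - y) (T x - y) \<le> \<theta> * norm (x - y) * norm (T x - y)"
    by blast
  with assms(1) show "infdist x (Fix T) \<le> 1 / (1 - max \<theta> 0) * norm (x - T x)"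
    using infdist_Fix_le_of_inner_le by fastforce
qed

theorem lemma3p5:
  fixes T :: "'a::{real_inner, complete_space} \<Rightarrow> 'a"
  assumes "averaged_nonexpansive T"
    and "Fix T \<noteq> {}"
    and "\<forall>\<rho>>0. \<exists>\<theta><1. \<forall>x. norm x \<le> \<rho> \<longrightarrow>
            (\<exists>y\<in>Fix T. inner (x - y) (T x - y) \<le> \<theta> * norm (x - y) * norm (T x - y))"
  shows "boundedly_linearly_regular T \<and>
         ((\<exists>\<theta><1. \<forall>x. \<exists>y\<in>Fix T. inner (x - y) (T x - y) \<le> \<theta> * norm (x - y) * norm (T x - y))
            \<longrightarrow> linearly_regular T)"
proof (intro conjI impI)
  show "boundedly_linearly_regular T"
    unfolding boundedly_linearly_regular_def
  proof (intro allI impI)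
    fix \<rho> :: real assume "\<rho> > 0"
    with assms(3) obtain \<theta> where "\<theta> < 1" and "\<forall>x\<in>{x. norm x \<le> \<rho>}.
        \<exists>y\<in>Fix T. inner (x - y) (T x - y) \<le> \<theta> * norm (x - y) * norm (T x - y)"
      by auto
    from uniform_infdist_Fix_bound_on[OF this]
    show "\<exists>\<kappa>\<ge>0. \<forall>x. norm x \<le> \<rho> \<longrightarrow> infdist x (Fix T) \<le> \<kappa> * norm (x - T x)"
      by auto
  qed
next
  assume "\<exists>\<theta><1. \<forall>x. \<exists>y\<in>Fix T. inner (x - y) (T x - y) \<le> \<theta> * norm (x - y) * norm (T x - y)"
  then obtain \<theta> where "\<theta> < 1" and "\<forall>x\<in>UNIV.
      \<exists>y\<in>Fix T. inner (x - y) (T x - y) \<le> \<theta> * norm (x - y) * norm (T x - y)"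
    by auto
  from uniform_infdist_Fix_bound_on[OF this]
  show "linearly_regular T"
    unfolding linearly_regular_def by auto
qed

end
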